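(* Let $N\ge 1$ and $n\ge 2$ be integers. Let $\phi_0,\phi_1,\phi_2,\dots$ be the orthonormal Hermite polynomials with respect to the weight $M(v)=\frac{1}{\sqrt{2\pi}}e^{-v^2/2}$, i.e. $\int_{\mathbb{R}}\phi_i(v)\phi_j(v)M(v)\,dv=\delta_{ij}$, with $\phi_0=1$, $\phi_1(v)=v$ and $v\phi_k(v)=\sqrt{k}\,\phi_{k-1}(v)+\sqrt{k+1}\,\phi_{k+1}(v)$. Let $0<z_1<\dots<z_N$ be the positive roots of $\phi_{2N}$, and set $v_j=-z_j$, $v_{N+j}=z_j$ for $j=1,\dots,N$. Let $V$ be the $2N\times 2N$ matrix with entries $V_{ij}=\phi_{i}(v_{j+1})$ for $i,j=0,\dots,2N-1$ (so the columns of $V$ correspond to the velocities $v_1,\dots,v_{2N}$ in this order). Let $A$ be the symmetric tridiagonal $2N\times 2N$ matrix with zero diagonal and off-diagonal entries $A_{p-1,p}=A_{p,p-1}=\sqrt{p}$ for $p=1,\dots,2N-1$ (indices from $0$). Define the $N\times 2N$ matrix $B_2=\begin{pmatrix} I_N & (n-1)I_N\end{pmatrix}V^T$. Then $y^TAy\le 0$ for every $y\in\ker(B_2)$. Moreover, if $n\ge 3$, then $y^TAy<0$ for every nonzero $y\in\ker(B_2)$.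
   Context: $I_N$ denotes the $N\times N$ identity matrix. The matrix $B_2$ encodes the boundary condition $B_2U(0,t)=0$ arising from the symmetric coupling condition $f^{(i)}(t,0,v)=\frac{1}{n-1}\sum_{k\ne i}f^{(k)}(t,0,-v)$ ($v>0$) at an $n$-edge network junction, for differences of moment vectors on two edges. *)

theory Defs
  imports Complex_Main "Jordan_Normal_Form.Matrix_Kernel"
begin

text \<open>Orthonormal Hermite polynomials (weight exp(-v^2/2)/sqrt(2 pi)), via the
three-term recurrence  v phi_(k+1) = sqrt(k+1) phi_k + sqrt(k+2) phi_(k+2).\<close>
fun hermite_on :: "nat \<Rightarrow> real \<Rightarrow> real" where
  "hermite_on 0 v = 1"
| "hermite_on (Suc 0) v = v"
| "hermite_on (Suc (Suc k)) v =
     (v * hermite_on (Suc k) v - sqrt (real (Suc k)) * hermite_on k v) / sqrt (real (Suc (Suc k)))"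

definition pos_root :: "nat \<Rightarrow> nat \<Rightarrow> real" where
  "pos_root N j = sorted_list_of_set {x. 0 < x \<and> hermite_on (2*N) x = 0} ! (j - 1)"

definition velocity :: "nat \<Rightarrow> nat \<Rightarrow> real" where
  "velocity N j = (if j \<le> N then - pos_root N j else pos_root N (j - N))"

definition Vmat :: "nat \<Rightarrow> real mat" where
  "Vmat N = mat (2*N) (2*N) (\<lambda>(i,j). hermite_on i (velocity N (j+1)))"

definition Amat :: "nat \<Rightarrow> real mat" where
  "Amat N = mat (2*N) (2*N) (\<lambda>(i,j). if j = i + 1 then sqrt (real j)
                                      else if i = j + 1 then sqrt (real i) else 0)"

definition B2mat :: "nat \<Rightarrow> nat \<Rightarrow> real mat" where
  "B2mat N n = mat N (2*N) (\<lambda>(i,j). if j = i then 1 else if j = i + N then real n - 1 else 0)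
               * transpose_mat (Vmat N)"

end

theory Submission
  imports Defs
begin

text \<open>
  A is the truncated Jacobi matrix of the orthonormal Hermite polynomials, so by the three-term
  recurrence every root x of phi_2N yields an eigenvector (phi_0(x), ..., phi_(2N-1)(x)) of A
  with eigenvalue x. By the classical interlacing argument phi_2N has 2N distinct real roots,
  symmetric about 0, so the columns of V form an orthogonal eigenbasis of the symmetric matrix A:
  V^T V = diag(c) with c_j > 0 and A V = V diag(v). Writing y = V z, the condition B_2 y = 0
  reads z_j = -(n-1) z_(j+N), since c_j = c_(j+N) by parity, and then
  y^T A y = sum_j c_j v_j z_j^2 = (1 - (n-1)^2) * sum_(j<N) c_j v_(j+N) z_(j+N)^2
  with v_(j+N) > 0.
\<close>

section \<open>Polynomials, signs and roots\<close>

lemma poly_eq_lead_coeff_prod_roots: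
  fixes p :: "'a::idom poly"
  assumes "finite S" "card S = degree p" "\<And>a. a \<in> S \<Longrightarrow> poly p a = 0"
  shows "poly p x = lead_coeff p * (\<Prod>a\<in>S. x - a)"
  using assms
proof (induction S arbitrary: p rule: finite_induct)
  case empty
  then have "p = [:lead_coeff p:]"
    using degree_0_id[of p] by simp
  then have "poly p x = lead_coeff p"
    by (metis add.right_neutral mult_zero_right poly_0 poly_pCons)
  then show ?case
    by simp
next
  case (insert a S)
  obtain q where q: "p = [:- a, 1:] * q"
    using insert.prems(2) poly_eq_0_iff_dvd by (metis dvdE insertI1)
  have "p \<noteq> 0"
    using insert by auto
  then have "degree p = Suc (degree q)"
    unfolding q by (subst degree_mult_eq) auto
  then have "degree q = card S"
    using insert by simp
  moreover have "poly q b = 0" if "b \<in> S" for b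
    using insert that q by auto
  ultimately have "poly q x = lead_coeff q * (\<Prod>a\<in>S. x - a)"
    using insert.IH by metis
  moreover have "lead_coeff p = lead_coeff q"
    unfolding q lead_coeff_mult by simp
  moreover have "poly p x = (x - a) * poly q x"
    unfolding q by (simp add: algebra_simps)
  ultimately show ?case
    using insert(1,2) by simp
qed

lemma prod_diff_sign:
  fixes S :: "'a::linordered_idom set"
  assumes "finite S" "x \<notin> S"
  shows "(\<Prod>a\<in>S. x - a) * (-1) ^ card {a\<in>S. x < a} > 0"
  using assms
proof (induction S rule: finite_induct)
  case (insert b S)
  have "{a\<in>insert b S. x < a} = (if x < b then insert b {a\<in>S. x < a} else {a\<in>S. x < a})"
    by auto
  then have card: "card {a\<in>insert b S. x < a} = (if x < b then Suc else id) (card {a\<in>S. x < a})"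
    using insert by simp
  have "0 < \<bar>x - b\<bar> * ((\<Prod>a\<in>S. x - a) * (-1) ^ card {a\<in>S. x < a})"
    using insert by simp
  then show ?case
    using insert(1,2) card by (auto simp: abs_if algebra_simps split: if_splits)
qed simp

lemma poly_sign_between_roots:
  fixes p :: "'a::linordered_idom poly"
  assumes "degree p = k" "lead_coeff p > 0"
    and "strict_mono_on {..<k} r" "\<And>i. i < k \<Longrightarrow> poly p (r i) = 0"
    and "j \<le> k" "\<And>i. i < j \<Longrightarrow> r i < x" "\<And>i. j \<le> i \<Longrightarrow> i < k \<Longrightarrow> x < r i"
  shows "poly p x * (-1) ^ (k - j) > 0"
proof -
  define S where "S = r ` {..<k}"
  have inj: "inj_on r {..<k}"
    using assms(3) strict_mono_on_imp_inj_on by blast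
  have "x \<noteq> r i" if "i < k" for i
    using assms(6,7)[of i] that by (cases "i < j") auto
  then have "x \<notin> S"
    unfolding S_def by blast
  have "x < r i \<longleftrightarrow> j \<le> i" if "i < k" for i
    using assms(6,7)[of i] that by (cases "i < j") auto
  then have "{a\<in>S. x < a} = r ` {j..<k}"
    unfolding S_def by auto
  then have "card {a\<in>S. x < a} = k - j"
    using inj_on_subset[OF inj, of "{j..<k}"] by (simp add: card_image subset_eq)
  moreover have "poly p x = lead_coeff p * (\<Prod>a\<in>S. x - a)"
    using assms(1,4) inj unfolding S_def by (intro poly_eq_lead_coeff_prod_roots) (auto simp: card_image)
  ultimately show ?thesis
    using prod_diff_sign[of S x] \<open>x \<notin> S\<close> assms(2) unfolding S_def by (simp add: mult.assoc)
qed

lemma sign_change_imp_root: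
  fixes f :: "real \<Rightarrow> real"
  assumes "a < b" "f a * f b < 0" "\<And>x. isCont f x"
  shows "\<exists>y. a < y \<and> y < b \<and> f y = 0"
proof -
  have "\<exists>y. a \<le> y \<and> y \<le> b \<and> f y = 0"
  proof (cases "f a < 0")
    case True
    then have "f b > 0"
      using assms(2) by (simp add: mult_less_0_iff)
    then show ?thesis
      using True assms IVT[of f a 0 b] by auto
  next
    case False
    then have "f a > 0" "f b < 0"
      using assms(2) by (auto simp: mult_less_0_iff)
    then show ?thesis
      using assms IVT2[of f b 0 a] by auto
  qed
  then show ?thesis
    using assms(2) by (metis mult_zero_left mult_zero_right order_less_irrefl order_le_less)
qed

lemma roots_between_alternating_signs:
  fixes f :: "real \<Rightarrow> real"
  assumes "\<And>x. isCont f x" "strict_mono_on {..k} x"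
    and "\<And>j. j \<le> k \<Longrightarrow> f (x j) * (-1) ^ (k - j) > 0"
  obtains y where "strict_mono_on {..<k} y"
    "\<And>j. j < k \<Longrightarrow> x j < y j \<and> y j < x (Suc j) \<and> f (y j) = 0"
proof -
  have "\<exists>y. x j < y \<and> y < x (Suc j) \<and> f y = 0" if "j < k" for j
  proof (rule sign_change_imp_root)
    show "x j < x (Suc j)"
      using strict_mono_onD[OF assms(2)] that by simp
    have "k - j = Suc (k - Suc j)"
      using that by simp
    then have "(f (x j) * f (x (Suc j))) * ((-1) ^ (k - Suc j) * (-1) ^ (k - Suc j)) < 0"
      using assms(3)[of j] assms(3)[of "Suc j"] that
      by (auto simp: algebra_simps zero_less_mult_iff mult_less_0_iff)
    then show "f (x j) * f (x (Suc j)) < 0"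
      by (simp add: power_mult_distrib[symmetric])
  qed (rule assms(1))
  then obtain y where y: "\<And>j. j < k \<Longrightarrow> x j < y j \<and> y j < x (Suc j) \<and> f (y j) = 0"
    by metis
  have "strict_mono_on {..<k} y"
  proof (rule strict_mono_onI)
    fix i j assume "i \<in> {..<k}" "j \<in> {..<k}" "i < j"
    then have "x (Suc i) \<le> x j"
      using strict_mono_on_leD[OF assms(2), of "Suc i" j] by simp
    then show "y i < y j"
      using y[of i] y[of j] \<open>i \<in> {..<k}\<close> \<open>j \<in> {..<k}\<close> by fastforce
  qed
  then show ?thesis
    using that y by blast
qed

lemma strict_mono_on_bracket:
  fixes r :: "nat \<Rightarrow> 'a::linordered_idom"
  assumes "strict_mono_on {..<k} r" "0 < M" "\<And>i. i < k \<Longrightarrow> \<bar>r i\<bar> < M"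
  shows "strict_mono_on {..Suc k} (\<lambda>j. if j = 0 then - M else if j \<le> k then r (j - 1) else M)"
proof (rule strict_mono_onI)
  fix i j :: nat
  assume "i \<in> {..Suc k}" "j \<in> {..Suc k}" "i < j"
  then consider "i = 0" "j \<le> k" | "i = 0" "\<not> j \<le> k" | "0 < i" "j \<le> k" | "0 < i" "i \<le> k" "\<not> j \<le> k"
    by fastforce
  then show "(if i = 0 then - M else if i \<le> k then r (i - 1) else M)
      < (if j = 0 then - M else if j \<le> k then r (j - 1) else M)"
  proof cases
    case 1
    then have "j - 1 < k"
      using \<open>i < j\<close> by simp
    then show ?thesis
      using 1 \<open>i < j\<close> assms(3)[of "j - 1"] by (simp add: abs_less_iff)
  next
    case 2
    then show ?thesis
      using assms(2) by simp
  next
    case 3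
    then show ?thesis
      using assms(1) \<open>i < j\<close> by (simp add: strict_mono_onD)
  next
    case 4
    then show ?thesis
      using assms(3)[of "i - 1"] by (simp add: abs_less_iff)
  qed
qed

section \<open>Matrices with an orthogonal eigenbasis\<close>

lemma sum_lessThan_double:
  fixes f :: "nat \<Rightarrow> 'a::comm_monoid_add"
  shows "(\<Sum>j<2 * N. f j) = (\<Sum>j<N. f j + f (j + N))"
proof -
  have "(\<Sum>j<2 * N. f j) = (\<Sum>j<N. f j) + (\<Sum>j = N..<N + N. f j)"
    by (simp add: lessThan_atLeast0 mult_2 sum.atLeastLessThan_concat)
  also have "(\<Sum>j = N..<N + N. f j) = (\<Sum>j<N. f (j + N))"
    using sum.shift_bounds_nat_ivl[of f 0 N N] by (simp add: lessThan_atLeast0)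
  finally show ?thesis
    by (simp add: sum.distrib)
qed

lemma mat_diag_mult_vec:
  fixes f :: "nat \<Rightarrow> 'a::semiring_1"
  assumes "z \<in> carrier_vec n"
  shows "mat_diag n f *\<^sub>v z = vec n (\<lambda>j. f j * z $ j)"
proof (rule eq_vecI)
  fix j assume "j < dim_vec (vec n (\<lambda>j. f j * z $ j))"
  then have "j < n"
    by simp
  have "row (mat_diag n f) j = f j \<cdot>\<^sub>v unit_vec n j"
    using \<open>j < n\<close> by (intro eq_vecI) (auto simp: mat_diag_def)
  then have "(mat_diag n f *\<^sub>v z) $ j = (f j \<cdot>\<^sub>v unit_vec n j) \<bullet> z"
    using \<open>j < n\<close> by (simp add: mat_diag_def)
  also have "\<dots> = f j * z $ j"
    using \<open>j < n\<close> assms by (simp add: smult_scalar_prod_distrib[of _ n])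
  finally show "(mat_diag n f *\<^sub>v z) $ j = vec n (\<lambda>j. f j * z $ j) $ j"
    using \<open>j < n\<close> by simp
qed (simp add: mat_diag_def)

lemma symmetric_eigenvectors_orthogonal:
  fixes A :: "'a::field mat"
  assumes "A \<in> carrier_mat n n" "transpose_mat A = A" "u \<in> carrier_vec n" "v \<in> carrier_vec n"
    and "A *\<^sub>v u = a \<cdot>\<^sub>v u" "A *\<^sub>v v = b \<cdot>\<^sub>v v" "a \<noteq> b"
  shows "u \<bullet> v = 0"
proof -
  have "a * (u \<bullet> v) = (A *\<^sub>v u) \<bullet> v"
    using assms(3,4,5) by simp
  also have "\<dots> = u \<bullet> (A *\<^sub>v v)"
    using transpose_vec_mult_scalar[OF assms(1,4,3)] assms(2) by simp
  also have "\<dots> = b * (u \<bullet> v)"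
    using assms(3,4,6) by simp
  finally show ?thesis
    using assms(7) by simp
qed

lemma quadratic_form_diagonalized:
  fixes A V :: "'a::comm_ring_1 mat"
  assumes A: "A \<in> carrier_mat n n" and V: "V \<in> carrier_mat n n"
    and eigen: "A * V = V * mat_diag n w" and gram: "transpose_mat V * V = mat_diag n c"
    and z: "z \<in> carrier_vec n"
  shows "(V *\<^sub>v z) \<bullet> (A *\<^sub>v (V *\<^sub>v z)) = (\<Sum>j<n. c j * w j * (z $ j)\<^sup>2)"
proof -
  have "A *\<^sub>v (V *\<^sub>v z) = V *\<^sub>v (mat_diag n w *\<^sub>v z)"
    using A V z eigen by (metis assoc_mult_mat_vec mat_diag_dim)
  moreover have "mat_diag n w *\<^sub>v z \<in> carrier_vec n"
    by (rule mult_mat_vec_carrier[OF mat_diag_dim z])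
  ultimately have "(V *\<^sub>v z) \<bullet> (A *\<^sub>v (V *\<^sub>v z)) = (transpose_mat V *\<^sub>v (V *\<^sub>v z)) \<bullet> (mat_diag n w *\<^sub>v z)"
    using transpose_vec_mult_scalar[OF V _ mult_mat_vec_carrier[OF V z]] by simp
  also have "transpose_mat V *\<^sub>v (V *\<^sub>v z) = mat_diag n c *\<^sub>v z"
    using V z gram by (metis assoc_mult_mat_vec carrier_matD transpose_carrier_mat)
  finally show ?thesis
    using z by (simp add: mat_diag_mult_vec scalar_prod_def lessThan_atLeast0 power2_eq_square mult_ac)
qed

lemma mat_mult_vec_surj_of_gram_diag:
  fixes V :: "'a::field mat"
  assumes V: "V \<in> carrier_mat n n" and gram: "transpose_mat V * V = mat_diag n c"
    and c: "\<And>j. j < n \<Longrightarrow> c j \<noteq> 0" and y: "y \<in> carrier_vec n"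
  obtains z where "z \<in> carrier_vec n" "y = V *\<^sub>v z"
proof -
  define P where "P = mat_diag n (\<lambda>j. inverse (c j)) * transpose_mat V"
  have P: "P \<in> carrier_mat n n"
    unfolding P_def using V by (metis mat_diag_dim mult_carrier_mat transpose_carrier_mat)
  have "P * V = mat_diag n (\<lambda>j. inverse (c j)) * mat_diag n c"
    unfolding P_def gram[symmetric] using V by (simp add: assoc_mult_mat[of _ n n _ n _ n])
  also have "\<dots> = 1\<^sub>m n"
    unfolding mat_diag_diag using c by (intro eq_matI) (auto simp: mat_diag_def)
  finally have "V * P = 1\<^sub>m n"
    by (rule mat_mult_left_right_inverse[OF P V])
  show ?thesis
  proof (rule that)
    show "P *\<^sub>v y \<in> carrier_vec n"
      using P y by simp
    show "y = V *\<^sub>v (P *\<^sub>v y)"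
      using V P y \<open>V * P = 1\<^sub>m n\<close> by (metis assoc_mult_mat_vec one_mult_mat_vec)
  qed
qed

section \<open>Roots of the Hermite polynomials\<close>

lemma hermite_on_three_term:
  "x * hermite_on k x = (if k = 0 then 0 else sqrt (real k) * hermite_on (k - 1) x)
                      + sqrt (real (Suc k)) * hermite_on (Suc k) x"
proof (cases k)
  case (Suc k')
  have "sqrt (real (Suc (Suc k'))) > 0" by simp
  then show ?thesis using Suc by (simp add: field_simps)
qed simp

lemma hermite_on_Suc_Suc_at_root:
  assumes "hermite_on (Suc k) x = 0"
  shows "hermite_on (Suc (Suc k)) x = - (sqrt (real (Suc k)) / sqrt (real (Suc (Suc k)))) * hermite_on k x"
  using assms by simp

lemma hermite_on_uminus: "hermite_on k (- x) = (-1) ^ k * hermite_on k x"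
  by (induction k x rule: hermite_on.induct) (auto simp: field_simps)

lemma hermite_on_even_at_0: "hermite_on (2 * m) 0 \<noteq> 0"
proof (induction m)
  case (Suc m)
  have "2 * Suc m = Suc (Suc (2 * m))" by simp
  then show ?case using Suc by simp
qed simp

fun hermite_poly :: "nat \<Rightarrow> real poly" where
  "hermite_poly 0 = 1"
| "hermite_poly (Suc 0) = [:0, 1:]"
| "hermite_poly (Suc (Suc k)) = Polynomial.smult (1 / sqrt (real (Suc (Suc k))))
     (pCons 0 (hermite_poly (Suc k)) - Polynomial.smult (sqrt (real (Suc k))) (hermite_poly k))"

lemma poly_hermite_poly: "poly (hermite_poly k) = hermite_on k"
  by (induction k rule: hermite_poly.induct) (auto simp: field_simps)

lemma degree_hermite_poly: "degree (hermite_poly k) = k"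
proof (induction k rule: hermite_poly.induct)
  case (3 k)
  let ?p = "pCons 0 (hermite_poly (Suc k))" and ?q = "Polynomial.smult (sqrt (real (Suc k))) (hermite_poly k)"
  have "hermite_poly (Suc k) \<noteq> 0"
    using 3 by (metis degree_0 nat.distinct(1))
  then have "degree ?p = Suc (Suc k)"
    using 3 by simp
  moreover have "degree (- ?q) < degree ?p"
    using \<open>degree ?p = _\<close> 3 degree_smult_le[of _ "hermite_poly k"] by simp
  ultimately have "degree (?p - ?q) = Suc (Suc k)"
    using degree_add_eq_left[of "- ?q" ?p] by simp
  then show ?case by simp
qed simp_all

lemma lead_coeff_hermite_poly_pos: "lead_coeff (hermite_poly k) > 0"
proof (induction k rule: hermite_poly.induct)
  case (3 k)
  have "lead_coeff (hermite_poly (Suc (Suc k))) = coeff (hermite_poly (Suc (Suc k))) (Suc (Suc k))"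
    by (simp only: degree_hermite_poly)
  moreover have "coeff (hermite_poly k) (Suc (Suc k)) = 0"
    by (simp add: coeff_eq_0 degree_hermite_poly)
  ultimately show ?case using 3 by (simp add: degree_hermite_poly)
qed simp_all

lemma isCont_hermite_on: "isCont (hermite_on k) x"
  by (metis poly_hermite_poly poly_isCont)

lemma hermite_on_eventually_pos: "\<exists>M. \<forall>x\<ge>M. hermite_on k x > 0"
proof -
  obtain M where "\<forall>x\<ge>M. poly (hermite_poly k) x \<ge> lead_coeff (hermite_poly k)"
    using poly_pinfty_gt_lc lead_coeff_hermite_poly_pos by blast
  then show ?thesis
    using lead_coeff_hermite_poly_pos[of k] by (metis less_le_trans poly_hermite_poly)
qed

lemma hermite_on_bracket:
  assumes "finite S"
  obtains M where "0 < M" "\<And>x. x \<in> S \<Longrightarrow> \<bar>x\<bar> < M"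
    "hermite_on n M > 0" "hermite_on n (- M) * (-1) ^ n > 0"
proof -
  obtain M0 where M0: "\<And>x. x \<ge> M0 \<Longrightarrow> hermite_on n x > 0"
    using hermite_on_eventually_pos by blast
  define M where "M = max M0 (1 + (\<Sum>x\<in>S. \<bar>x\<bar>))"
  have "\<bar>x\<bar> < M" if "x \<in> S" for x
    using member_le_sum[of x S abs] assms that unfolding M_def by simp
  moreover have "0 < M"
    unfolding M_def by (simp add: sum_nonneg add_pos_nonneg max.strict_coboundedI2)
  moreover have "hermite_on n M > 0"
    using M0 unfolding M_def by simp
  moreover have "hermite_on n (- M) * (-1) ^ n = ((-1) ^ n * (-1) ^ n) * hermite_on n M"
    by (simp add: hermite_on_uminus)
  then have "hermite_on n (- M) * (-1) ^ n = hermite_on n M"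
    by (simp flip: power_add)
  ultimately show ?thesis
    using that by auto
qed

lemma hermite_on_roots_between:
  assumes r_mono: "strict_mono_on {..<k} r"
    and r_sign: "\<And>i. i < k \<Longrightarrow> hermite_on (Suc k) (r i) * (-1) ^ (k - i) > 0"
  obtains y where "strict_mono_on {..<Suc k} y" "\<And>j. j < Suc k \<Longrightarrow> hermite_on (Suc k) (y j) = 0"
    "\<And>i j. i < j \<Longrightarrow> j < Suc k \<Longrightarrow> r i < y j" "\<And>i j. j \<le> i \<Longrightarrow> i < k \<Longrightarrow> y j < r i"
proof -
  obtain M where "0 < M" and M_bound: "\<And>x. x \<in> r ` {..<k} \<Longrightarrow> \<bar>x\<bar> < M"
    and M_pos: "hermite_on (Suc k) M > 0" and M_neg: "hermite_on (Suc k) (- M) * (-1) ^ Suc k > 0"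
    using hermite_on_bracket[of "r ` {..<k}" "Suc k"] by (metis finite_imageI finite_lessThan)
  define x where "x j = (if j = 0 then - M else if j \<le> k then r (j - 1) else M)" for j
  have x_mono: "strict_mono_on {..Suc k} x"
    unfolding x_def using strict_mono_on_bracket[OF r_mono \<open>0 < M\<close>] M_bound by blast
  have x_sign: "hermite_on (Suc k) (x j) * (-1) ^ (Suc k - j) > 0" if j: "j \<le> Suc k" for j
  proof -
    consider "j = 0" | "0 < j" "j \<le> k" | "j = Suc k"
      using j by (metis le_SucE neq0_conv)
    then show ?thesis
    proof cases
      case 2
      then have "Suc k - j = k - (j - 1)" "j - 1 < k"
        by auto
      then show ?thesis
        using 2 r_sign[of "j - 1"] unfolding x_def by simp
    qed (use M_pos M_neg in \<open>simp_all add: x_def\<close>)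
  qed
  obtain y where y_mono: "strict_mono_on {..<Suc k} y"
    and y: "\<And>j. j < Suc k \<Longrightarrow> x j < y j \<and> y j < x (Suc j) \<and> hermite_on (Suc k) (y j) = 0"
    using roots_between_alternating_signs[OF isCont_hermite_on x_mono x_sign] by metis
  have x_le: "x i \<le> x j" if "i \<le> j" "j \<le> Suc k" for i j
    using strict_mono_on_leD[OF x_mono, of i j] that by simp
  have x_Suc: "x (Suc i) = r i" if "i < k" for i
    using that unfolding x_def by simp
  show ?thesis
  proof (rule that[OF y_mono])
    show "hermite_on (Suc k) (y j) = 0" if "j < Suc k" for j
      using y[OF that] by blast
    show "r i < y j" if "i < j" "j < Suc k" for i j
      using y[of j] x_le[of "Suc i" j] x_Suc[of i] that by fastforce
    show "y j < r i" if "j \<le> i" "i < k" for i j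
      using y[of j] x_le[of "Suc j" "Suc i"] x_Suc[of i] that by fastforce
  qed
qed

lemma hermite_on_interlacing:
  "\<exists>r. strict_mono_on {..<Suc m} r \<and> (\<forall>i<Suc m. hermite_on (Suc m) (r i) = 0)
      \<and> (\<forall>i<Suc m. hermite_on m (r i) * (-1) ^ (m - i) > 0)"
proof (induction m)
  case 0
  show ?case
    by (rule exI[of _ "\<lambda>_. 0"]) (auto intro: strict_mono_onI)
next
  case (Suc m)
  define k where "k = Suc m"
  obtain r where r_mono: "strict_mono_on {..<k} r" and r_root: "\<forall>i<k. hermite_on k (r i) = 0"
    and r_sign: "\<forall>i<k. hermite_on m (r i) * (-1) ^ (m - i) > 0"
    using Suc.IH unfolding k_def by blast
  \<comment> \<open>At a root of phi_k the recurrence gives phi_(k+1) = -c phi_(k-1) with c > 0.\<close>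
  have "hermite_on (Suc k) (r i) * (-1) ^ (k - i) > 0" if "i < k" for i
  proof -
    have "hermite_on (Suc k) (r i) * (-1) ^ (k - i)
        = sqrt (real k) / sqrt (real (Suc k)) * (hermite_on m (r i) * (-1) ^ (m - i))"
      using hermite_on_Suc_Suc_at_root[of m "r i"] r_root that
      unfolding k_def by (simp add: Suc_diff_le)
    then show ?thesis
      using r_sign that unfolding k_def by simp
  qed
  then obtain y where y_mono: "strict_mono_on {..<Suc k} y"
    and y_root: "\<And>j. j < Suc k \<Longrightarrow> hermite_on (Suc k) (y j) = 0"
    and y_above: "\<And>i j. i < j \<Longrightarrow> j < Suc k \<Longrightarrow> r i < y j"
    and y_below: "\<And>i j. j \<le> i \<Longrightarrow> i < k \<Longrightarrow> y j < r i"
    using hermite_on_roots_between[OF r_mono] by metis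
  have "hermite_on k (y j) * (-1) ^ (k - j) > 0" if "j < Suc k" for j
    using poly_sign_between_roots[OF degree_hermite_poly lead_coeff_hermite_poly_pos r_mono, of j "y j"]
      r_root y_above[OF _ that] y_below that
    by (simp add: poly_hermite_poly)
  then show ?case
    using y_mono y_root unfolding k_def[symmetric] by (intro exI[of _ y]) blast
qed

lemma finite_pos_roots_hermite_on: "finite {x. 0 < x \<and> hermite_on k x = 0}"
proof -
  have "hermite_poly k \<noteq> 0"
    using lead_coeff_hermite_poly_pos[of k] by (metis leading_coeff_0_iff order_less_irrefl)
  then have "finite {x. hermite_on k x = 0}"
    by (metis poly_roots_finite poly_hermite_poly)
  then show ?thesis
    by (rule rev_finite_subset) auto
qed

lemma card_pos_roots_hermite_on_even: "N \<le> card {x. 0 < x \<and> hermite_on (2 * N) x = 0}"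
proof (cases "N = 0")
  case False
  define Z where "Z = {x. 0 < x \<and> hermite_on (2 * N) x = 0}"
  have two_N: "Suc (2 * N - 1) = 2 * N"
    using False by simp
  obtain r where r_mono: "strict_mono_on {..<2 * N} r"
    and r_root: "\<forall>i<2 * N. hermite_on (2 * N) (r i) = 0"
    using hermite_on_interlacing[of "2 * N - 1"] unfolding two_N by blast
  have Z_finite: "finite Z"
    unfolding Z_def by (rule finite_pos_roots_hermite_on)
  have roots_in_Z: "r ` {..<2 * N} \<subseteq> Z \<union> uminus ` Z"
  proof
    fix x assume "x \<in> r ` {..<2 * N}"
    then have "hermite_on (2 * N) x = 0"
      using r_root by auto
    moreover have "x \<noteq> 0"
      using calculation hermite_on_even_at_0[of N] by auto
    ultimately show "x \<in> Z \<union> uminus ` Z"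
      unfolding Z_def using hermite_on_uminus[of "2 * N" x]
      by (cases "x > 0") (auto intro!: image_eqI[of x uminus "- x"])
  qed
  have "2 * N = card (r ` {..<2 * N})"
    using strict_mono_on_imp_inj_on[OF r_mono] by (simp add: card_image)
  also have "\<dots> \<le> card (Z \<union> uminus ` Z)"
    using roots_in_Z Z_finite by (intro card_mono) auto
  also have "\<dots> \<le> card Z + card (uminus ` Z)"
    by (rule card_Un_le)
  also have "\<dots> = 2 * card Z"
    by (simp add: card_image)
  finally show ?thesis
    unfolding Z_def by simp
qed simp

lemma pos_root_mem:
  assumes "j \<in> {1..N}"
  shows "pos_root N j \<in> {x. 0 < x \<and> hermite_on (2 * N) x = 0}"
proof -
  have "j - 1 < N"
    using assms by auto
  then have "j - 1 < card {x. 0 < x \<and> hermite_on (2 * N) x = 0}"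
    using card_pos_roots_hermite_on_even[of N] by (rule less_le_trans)
  then show ?thesis
    unfolding pos_root_def using finite_pos_roots_hermite_on
    by (metis length_sorted_list_of_set nth_mem set_sorted_list_of_set)
qed

lemma inj_on_pos_root: "inj_on (pos_root N) {1..N}"
proof (rule inj_onI)
  fix i j assume i: "i \<in> {1..N}" and j: "j \<in> {1..N}" and eq: "pos_root N i = pos_root N j"
  define zs where "zs = sorted_list_of_set {x. 0 < x \<and> hermite_on (2 * N) x = 0}"
  have "N \<le> length zs"
    unfolding zs_def using card_pos_roots_hermite_on_even[of N] by simp
  then have "i - 1 < length zs" "j - 1 < length zs"
    using i j by auto
  moreover have "distinct zs"
    unfolding zs_def by simp
  ultimately have "i - 1 = j - 1"
    using eq unfolding pos_root_def zs_def[symmetric] by (simp add: nth_eq_iff_index_eq)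
  then show "i = j"
    using i j unfolding atLeastAtMost_iff by linarith
qed

lemma velocity_cases:
  assumes "j \<in> {1..2 * N}"
  obtains "j \<in> {1..N}" "velocity N j = - pos_root N j"
  | "j - N \<in> {1..N}" "velocity N j = pos_root N (j - N)"
proof (cases "j \<le> N")
  case True
  then show ?thesis
    using assms that(1) unfolding velocity_def by simp
next
  case False
  then have "j - N \<in> {1..N}"
    using assms unfolding atLeastAtMost_iff by linarith
  then show ?thesis
    using False that(2) unfolding velocity_def by simp
qed

lemma hermite_on_velocity:
  assumes "j \<in> {1..2 * N}"
  shows "hermite_on (2 * N) (velocity N j) = 0"
  using assms
proof (cases rule: velocity_cases)
  case 1
  then show ?thesis
    using pos_root_mem[of j N] hermite_on_uminus[of "2 * N"] by simp
next
  case 2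
  then show ?thesis
    using pos_root_mem[of "j - N" N] by simp
qed

lemma velocity_reflect:
  assumes "j \<in> {1..N}"
  shows "velocity N j = - velocity N (j + N)" and "0 < velocity N (j + N)"
proof -
  have "velocity N (j + N) = pos_root N j"
    using assms unfolding velocity_def by simp
  then show "velocity N j = - velocity N (j + N)" "0 < velocity N (j + N)"
    using assms pos_root_mem[OF assms] unfolding velocity_def by simp_all
qed

lemma inj_on_velocity: "inj_on (velocity N) {1..2 * N}"
proof (rule inj_onI)
  fix i j assume i: "i \<in> {1..2 * N}" and j: "j \<in> {1..2 * N}" and eq: "velocity N i = velocity N j"
  have pos: "0 < pos_root N l" if "l \<in> {1..N}" for l
    using pos_root_mem[OF that] by simp
  have inj: "l = l'" if "l \<in> {1..N}" "l' \<in> {1..N}" "pos_root N l = pos_root N l'" for l l'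
    using inj_on_pos_root[of N] that by (simp add: inj_on_eq_iff)
  from i show "i = j"
  proof (cases rule: velocity_cases)
    case i1: 1
    from j show ?thesis
    proof (cases rule: velocity_cases)
      case 1
      then have "pos_root N i = pos_root N j"
        using i1(2) eq by linarith
      then show ?thesis
        using i1(1) 1(1) inj by blast
    next
      case 2
      then show ?thesis
        using i1 eq pos[of i] pos[of "j - N"] by linarith
    qed
  next
    case i2: 2
    from j show ?thesis
    proof (cases rule: velocity_cases)
      case 1
      then show ?thesis
        using i2 eq pos[of j] pos[of "i - N"] by linarith
    next
      case 2
      then have "pos_root N (i - N) = pos_root N (j - N)"
        using i2(2) eq by linarith
      then have "i - N = j - N"
        using i2(1) 2(1) inj by blast
      then show ?thesis
        using i2(1) 2(1) unfolding atLeastAtMost_iff by linarith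
    qed
  qed
qed

definition hermite_vec :: "nat \<Rightarrow> real \<Rightarrow> real vec" where
  "hermite_vec K x = vec K (\<lambda>i. hermite_on i x)"

text \<open>
  The reciprocal of the Gauss-Hermite weight at the node velocity N (j + 1): matrix indices
  are 0-based, velocities 1-based.
\<close>
definition inv_christoffel :: "nat \<Rightarrow> nat \<Rightarrow> real" where
  "inv_christoffel N j = hermite_vec (2 * N) (velocity N (Suc j)) \<bullet> hermite_vec (2 * N) (velocity N (Suc j))"

lemma hermite_vec_carrier: "hermite_vec K x \<in> carrier_vec K"
  by (simp add: hermite_vec_def)

lemma Amat_carrier: "Amat N \<in> carrier_mat (2 * N) (2 * N)"
  by (simp add: Amat_def)

lemma Vmat_carrier: "Vmat N \<in> carrier_mat (2 * N) (2 * N)"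
  by (simp add: Vmat_def)

lemma transpose_Amat: "transpose_mat (Amat N) = Amat N"
  by (rule eq_matI) (auto simp: Amat_def)

lemma Amat_mult_hermite_vec:
  assumes "hermite_on (2 * N) x = 0"
  shows "Amat N *\<^sub>v hermite_vec (2 * N) x = x \<cdot>\<^sub>v hermite_vec (2 * N) x"
proof (rule eq_vecI)
  fix i assume "i < dim_vec (x \<cdot>\<^sub>v hermite_vec (2 * N) x)"
  then have i: "i < 2 * N"
    by (simp add: hermite_vec_def)
  have "(Amat N *\<^sub>v hermite_vec (2 * N) x) $ i = (\<Sum>l = 0..<2 * N.
      (if l = i + 1 then sqrt (real l) else if i = l + 1 then sqrt (real i) else 0) * hermite_on l x)"
    using i by (simp add: Amat_def hermite_vec_def scalar_prod_def)
  also have "\<dots> = (\<Sum>l = 0..<2 * N. (if l = Suc i then sqrt (real (Suc i)) * hermite_on (Suc i) x else 0)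
      + (if 0 < i \<and> l = i - 1 then sqrt (real i) * hermite_on (i - 1) x else 0))"
    by (rule sum.cong) auto
  also have "\<dots> = (if Suc i < 2 * N then sqrt (real (Suc i)) * hermite_on (Suc i) x else 0)
      + (if 0 < i then sqrt (real i) * hermite_on (i - 1) x else 0)"
    using i by (simp add: sum.distrib sum.delta)
  also have "\<dots> = x * hermite_on i x"
  proof (cases "Suc i < 2 * N")
    case False
    then have "Suc i = 2 * N"
      using i by simp
    then show ?thesis
      using hermite_on_three_term[of x i] assms by auto
  qed (use hermite_on_three_term[of x i] in auto)
  finally show "(Amat N *\<^sub>v hermite_vec (2 * N) x) $ i = (x \<cdot>\<^sub>v hermite_vec (2 * N) x) $ i"
    using i by (simp add: hermite_vec_def)
qed (simp add: Amat_def hermite_vec_def)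

lemma col_Vmat: "j < 2 * N \<Longrightarrow> col (Vmat N) j = hermite_vec (2 * N) (velocity N (Suc j))"
  by (rule eq_vecI) (auto simp: Vmat_def hermite_vec_def)

lemma inv_christoffel_ge_1: "j < 2 * N \<Longrightarrow> 1 \<le> inv_christoffel N j"
proof -
  assume "j < 2 * N"
  then have "(hermite_on 0 (velocity N (Suc j)))\<^sup>2 \<le> (\<Sum>i<2 * N. (hermite_on i (velocity N (Suc j)))\<^sup>2)"
    by (intro member_le_sum) auto
  then show ?thesis
    by (simp add: inv_christoffel_def hermite_vec_def scalar_prod_def power2_eq_square lessThan_atLeast0)
qed

lemma inv_christoffel_reflect:
  assumes "j < N"
  shows "inv_christoffel N (j + N) = inv_christoffel N j"
proof -
  have "velocity N (Suc j) = - velocity N (Suc (j + N))"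
    using velocity_reflect(1)[of "Suc j" N] assms by simp
  then show ?thesis
    unfolding inv_christoffel_def hermite_vec_def scalar_prod_def
    by (simp add: hermite_on_uminus algebra_simps flip: power_add)
qed

lemma gram_Vmat: "transpose_mat (Vmat N) * Vmat N = mat_diag (2 * N) (inv_christoffel N)"
proof (rule eq_matI)
  fix i j assume "i < dim_row (mat_diag (2 * N) (inv_christoffel N))" "j < dim_col (mat_diag (2 * N) (inv_christoffel N))"
  then have i: "i < 2 * N" and j: "j < 2 * N"
    by (auto simp: mat_diag_def)
  have "hermite_vec (2 * N) (velocity N (Suc i)) \<bullet> hermite_vec (2 * N) (velocity N (Suc j)) = 0" if "i \<noteq> j"
  proof (rule symmetric_eigenvectors_orthogonal[OF Amat_carrier transpose_Amat hermite_vec_carrier hermite_vec_carrier])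
    show "Amat N *\<^sub>v hermite_vec (2 * N) (velocity N (Suc i)) = velocity N (Suc i) \<cdot>\<^sub>v hermite_vec (2 * N) (velocity N (Suc i))"
      using i by (intro Amat_mult_hermite_vec hermite_on_velocity) auto
    show "Amat N *\<^sub>v hermite_vec (2 * N) (velocity N (Suc j)) = velocity N (Suc j) \<cdot>\<^sub>v hermite_vec (2 * N) (velocity N (Suc j))"
      using j by (intro Amat_mult_hermite_vec hermite_on_velocity) auto
    show "velocity N (Suc i) \<noteq> velocity N (Suc j)"
      using inj_on_velocity[of N] i j that by (auto simp: inj_on_eq_iff)
  qed
  then show "(transpose_mat (Vmat N) * Vmat N) $$ (i, j) = mat_diag (2 * N) (inv_christoffel N) $$ (i, j)"
    using i j Vmat_carrier[of N] by (auto simp: mat_diag_def col_Vmat inv_christoffel_def)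
qed (auto simp: Vmat_def mat_diag_def)

lemma Amat_mult_Vmat: "Amat N * Vmat N = Vmat N * mat_diag (2 * N) (\<lambda>j. velocity N (Suc j))"
proof (rule eq_matI)
  fix i j assume "i < dim_row (Vmat N * mat_diag (2 * N) (\<lambda>j. velocity N (Suc j)))"
    "j < dim_col (Vmat N * mat_diag (2 * N) (\<lambda>j. velocity N (Suc j)))"
  then have i: "i < 2 * N" and j: "j < 2 * N"
    by (auto simp: Vmat_def mat_diag_def)
  have "(Amat N * Vmat N) $$ (i, j) = (Amat N *\<^sub>v col (Vmat N) j) $ i"
    using i j Amat_carrier[of N] Vmat_carrier[of N] by simp
  also have "\<dots> = velocity N (Suc j) * Vmat N $$ (i, j)"
    using i j hermite_on_velocity[of "Suc j" N]
    by (simp add: col_Vmat Amat_mult_hermite_vec) (simp add: Vmat_def hermite_vec_def)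
  finally show "(Amat N * Vmat N) $$ (i, j) = (Vmat N * mat_diag (2 * N) (\<lambda>j. velocity N (Suc j))) $$ (i, j)"
    unfolding mat_diag_mult_right[OF Vmat_carrier] using i j by simp
qed (auto simp: Amat_def Vmat_def mat_diag_def)

section \<open>The kernel of B_2\<close>

lemma B2mat_mult_vec_nth:
  assumes "y \<in> carrier_vec (2 * N)" "i < N"
  shows "(B2mat N n *\<^sub>v y) $ i
    = (transpose_mat (Vmat N) *\<^sub>v y) $ i + (real n - 1) * (transpose_mat (Vmat N) *\<^sub>v y) $ (i + N)"
proof -
  define u where "u = transpose_mat (Vmat N) *\<^sub>v y"
  have u: "u \<in> carrier_vec (2 * N)"
    unfolding u_def using assms(1) Vmat_carrier[of N] by simp
  have "(B2mat N n *\<^sub>v y) $ i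
      = (\<Sum>l = 0..<2 * N. (if l = i then 1 else if l = i + N then real n - 1 else 0) * u $ l)"
    unfolding B2mat_def u_def using assms Vmat_carrier[of N]
    by (subst assoc_mult_mat_vec[of _ N "2 * N" _ "2 * N"]) (auto simp: scalar_prod_def)
  also have "\<dots> = (\<Sum>l = 0..<2 * N. (if l = i then u $ i else 0) + (if l = i + N then (real n - 1) * u $ (i + N) else 0))"
    using assms(2) by (intro sum.cong) auto
  also have "\<dots> = u $ i + (real n - 1) * u $ (i + N)"
    using assms(2) by (simp add: sum.distrib)
  finally show ?thesis
    unfolding u_def .
qed

lemma B2mat_kernel_coordinates:
  assumes "y \<in> mat_kernel (B2mat N n)"
  obtains z where "z \<in> carrier_vec (2 * N)" "y = Vmat N *\<^sub>v z"
    "\<And>j. j < N \<Longrightarrow> z $ j = - (real n - 1) * z $ (j + N)"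
proof -
  have "B2mat N n \<in> carrier_mat N (2 * N)"
    unfolding B2mat_def using Vmat_carrier[of N] by (intro mult_carrier_mat) auto
  then have y: "y \<in> carrier_vec (2 * N)" and By: "B2mat N n *\<^sub>v y = 0\<^sub>v N"
    using mat_kernelD assms by blast+
  obtain z where z: "z \<in> carrier_vec (2 * N)" and yz: "y = Vmat N *\<^sub>v z"
    using mat_mult_vec_surj_of_gram_diag[OF Vmat_carrier gram_Vmat _ y] inv_christoffel_ge_1
    by (metis not_one_le_zero)
  have Vty: "(transpose_mat (Vmat N) *\<^sub>v y) $ j = inv_christoffel N j * z $ j" if "j < 2 * N" for j
    using that z Vmat_carrier[of N] unfolding yz
    by (simp add: assoc_mult_mat_vec[symmetric, of _ "2 * N" "2 * N"] gram_Vmat mat_diag_mult_vec)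
  have "z $ j = - (real n - 1) * z $ (j + N)" if "j < N" for j
  proof -
    have "0 = (B2mat N n *\<^sub>v y) $ j"
      using By that by simp
    also have "\<dots> = inv_christoffel N j * (z $ j + (real n - 1) * z $ (j + N))"
      using that B2mat_mult_vec_nth[OF y that] Vty inv_christoffel_reflect[OF that]
      by (simp add: algebra_simps)
    finally have "z $ j + (real n - 1) * z $ (j + N) = 0"
      using inv_christoffel_ge_1[of j N] that by simp
    then show ?thesis
      by (simp only: mult_minus_left eq_neg_iff_add_eq_0)
  qed
  then show ?thesis
    using that z yz by blast
qed

lemma quadratic_form_Vmat_reflected:
  assumes z: "z \<in> carrier_vec (2 * N)" and z_rel: "\<And>j. j < N \<Longrightarrow> z $ j = - a * z $ (j + N)"
  shows "(Vmat N *\<^sub>v z) \<bullet> (Amat N *\<^sub>v (Vmat N *\<^sub>v z))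
    = (1 - a\<^sup>2) * (\<Sum>j<N. inv_christoffel N j * velocity N (Suc (j + N)) * (z $ (j + N))\<^sup>2)"
proof -
  have "(Vmat N *\<^sub>v z) \<bullet> (Amat N *\<^sub>v (Vmat N *\<^sub>v z))
      = (\<Sum>j<2 * N. inv_christoffel N j * velocity N (Suc j) * (z $ j)\<^sup>2)"
    by (rule quadratic_form_diagonalized[OF Amat_carrier Vmat_carrier Amat_mult_Vmat gram_Vmat z])
  also have "\<dots> = (\<Sum>j<N. (1 - a\<^sup>2) * (inv_christoffel N j * velocity N (Suc (j + N)) * (z $ (j + N))\<^sup>2))"
    unfolding sum_lessThan_double
  proof (rule sum.cong)
    fix j assume "j \<in> {..<N}"
    then have "z $ j = - a * z $ (j + N)"
      and "inv_christoffel N (j + N) = inv_christoffel N j"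
      and "velocity N (Suc j) = - velocity N (Suc (j + N))"
      using z_rel[of j] inv_christoffel_reflect[of j N] velocity_reflect(1)[of "Suc j" N] by simp_all
    then show "inv_christoffel N j * velocity N (Suc j) * (z $ j)\<^sup>2
        + inv_christoffel N (j + N) * velocity N (Suc (j + N)) * (z $ (j + N))\<^sup>2
        = (1 - a\<^sup>2) * (inv_christoffel N j * velocity N (Suc (j + N)) * (z $ (j + N))\<^sup>2)"
      by (simp only:) (simp add: algebra_simps power2_eq_square)
  qed simp
  finally show ?thesis
    by (simp add: sum_distrib_left)
qed

lemma quadratic_form_B2mat_kernel:
  assumes "y \<in> mat_kernel (B2mat N n)"
  obtains s where "0 \<le> s" "y \<noteq> 0\<^sub>v (2 * N) \<Longrightarrow> 0 < s"
    "y \<bullet> (Amat N *\<^sub>v y) = (1 - (real n - 1)\<^sup>2) * s"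
proof -
  obtain z where z: "z \<in> carrier_vec (2 * N)" and yz: "y = Vmat N *\<^sub>v z"
    and z_rel: "\<And>j. j < N \<Longrightarrow> z $ j = - (real n - 1) * z $ (j + N)"
    using B2mat_kernel_coordinates[OF assms] by blast
  define t where "t j = inv_christoffel N j * velocity N (Suc (j + N)) * (z $ (j + N))\<^sup>2" for j
  have t_nonneg: "0 \<le> t j" if "j < N" for j
    using inv_christoffel_ge_1[of j N] velocity_reflect(2)[of "Suc j" N] that
    unfolding t_def by simp
  have nonneg: "0 \<le> (\<Sum>j<N. t j)"
    using t_nonneg by (intro sum_nonneg) simp
  have pos: "0 < (\<Sum>j<N. t j)" if "y \<noteq> 0\<^sub>v (2 * N)"
  proof -
    have "z \<noteq> 0\<^sub>v (2 * N)"
      using that Vmat_carrier[of N] unfolding yz by auto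
    then obtain l where l: "l < 2 * N" "z $ l \<noteq> 0"
      using z by (metis carrier_vecD eq_vecI index_zero_vec(1,2))
    obtain j where j: "j < N" "z $ (j + N) \<noteq> 0"
    proof (cases "l < N")
      case True
      then show ?thesis
        using that[of l] z_rel[of l] l(2) by auto
    next
      case False
      then show ?thesis
        using that[of "l - N"] l by simp
    qed
    then have "0 < t j"
      using inv_christoffel_ge_1[of j N] velocity_reflect(2)[of "Suc j" N]
      unfolding t_def by simp
    then show ?thesis
      using j t_nonneg by (intro sum_pos2[of _ j]) auto
  qed
  have quadratic_form: "y \<bullet> (Amat N *\<^sub>v y) = (1 - (real n - 1)\<^sup>2) * (\<Sum>j<N. t j)"
    unfolding yz t_def by (rule quadratic_form_Vmat_reflected[OF z z_rel])
  show ?thesis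
    by (rule that[OF nonneg pos quadratic_form])
qed

theorem lemma4p1:
  fixes N n :: nat
  assumes "N \<ge> 1" and "n \<ge> 2"
  shows "(\<forall>y \<in> mat_kernel (B2mat N n). y \<bullet> (Amat N *\<^sub>v y) \<le> 0)
       \<and> (n \<ge> 3 \<longrightarrow> (\<forall>y \<in> mat_kernel (B2mat N n). y \<noteq> 0\<^sub>v (2*N) \<longrightarrow> y \<bullet> (Amat N *\<^sub>v y) < 0))"
proof -
  have "y \<bullet> (Amat N *\<^sub>v y) \<le> 0 \<and> (n \<ge> 3 \<longrightarrow> y \<noteq> 0\<^sub>v (2 * N) \<longrightarrow> y \<bullet> (Amat N *\<^sub>v y) < 0)"
    if y: "y \<in> mat_kernel (B2mat N n)" for y
  proof -
    obtain s where "0 \<le> s" "y \<noteq> 0\<^sub>v (2 * N) \<Longrightarrow> 0 < s"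
      and quadratic_form: "y \<bullet> (Amat N *\<^sub>v y) = (1 - (real n - 1)\<^sup>2) * s"
      using quadratic_form_B2mat_kernel[OF y] by metis
    moreover have "1 \<le> (real n - 1)\<^sup>2" and "n \<ge> 3 \<Longrightarrow> 1 < (real n - 1)\<^sup>2"
      using assms(2) by (simp_all add: one_le_power one_less_power)
    ultimately show ?thesis
      by (auto intro: mult_nonpos_nonneg mult_neg_pos)
  qed
  then show ?thesis
    by blast
qed

end
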